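(* Let $p$ be prime, $\mathbb{F}=\mathbb{F}_p$, $n\ge1$. Let $r_1,\dots,r_n$ be chosen uniformly and independently from $\mathbb{F}^N$. For each nonzero sequence $\kappa=(k_1,\dots,k_n)$ with $0\le k_i<p$, let $X_\kappa=\sum_{j=1}^N\prod_{i=1}^nr_i(j)^{k_i}$, and let $X=(X_\kappa)_\kappa\in\mathbb{F}^{K}$, $K=p^n-1$. Let $P$ be the distribution of $X$ and $U$ the uniform distribution on $\mathbb{F}^K$. Then there are constants $c>0$ and $N_0$ depending on $n,p$ but not on $N$ such that for all $N\ge N_0$, $$\|P-U\|_1\le\exp\{-cN\}.$$
   Context: $\|\cdot\|_1$ is the statistical ($\ell_1$) distance between distributions on $\mathbb{F}^K$; $r(j)$ is the $j$-th coordinate of $r$. *)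

theory Defs
  imports "HOL-Probability.Probability"
begin

text \<open>Elements of F_p are represented by naturals in {0..<p}; arithmetic is taken mod p.
  The n vectors r_1..r_N in F^N are encoded as one function r on index pairs (i,j),
  i < n (vector index, 0-based), j < N (coordinate, 0-based), r(i,j) = r_{i+1}(j+1).\<close>

definition exps :: "nat \<Rightarrow> nat \<Rightarrow> (nat \<Rightarrow> nat) set" where
  "exps p n = (PiE {0..<n} (\<lambda>_. {0..<p})) - {restrict (\<lambda>_. 0) {0..<n}}"

definition samples :: "nat \<Rightarrow> nat \<Rightarrow> nat \<Rightarrow> (nat \<times> nat \<Rightarrow> nat) set" where
  "samples p n N = PiE ({0..<n} \<times> {0..<N}) (\<lambda>_. {0..<p})"

definition Xvec :: "nat \<Rightarrow> nat \<Rightarrow> nat \<Rightarrow> (nat \<times> nat \<Rightarrow> nat) \<Rightarrow> ((nat \<Rightarrow> nat) \<Rightarrow> nat)" where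
  "Xvec p n N r = restrict (\<lambda>\<kappa>. (\<Sum>j<N. \<Prod>i<n. r (i, j) ^ \<kappa> i) mod p) (exps p n)"

definition target :: "nat \<Rightarrow> nat \<Rightarrow> ((nat \<Rightarrow> nat) \<Rightarrow> nat) set" where
  "target p n = PiE (exps p n) (\<lambda>_. {0..<p})"

definition distP :: "nat \<Rightarrow> nat \<Rightarrow> nat \<Rightarrow> ((nat \<Rightarrow> nat) \<Rightarrow> nat) pmf" where
  "distP p n N = map_pmf (Xvec p n N) (pmf_of_set (samples p n N))"

definition distU :: "nat \<Rightarrow> nat \<Rightarrow> ((nat \<Rightarrow> nat) \<Rightarrow> nat) pmf" where
  "distU p n = pmf_of_set (target p n)"

definition l1_dist :: "nat \<Rightarrow> nat \<Rightarrow> nat \<Rightarrow> real" where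
  "l1_dist p n N = (\<Sum>x\<in>target p n. \<bar>pmf (distP p n N) x - pmf (distU p n) x\<bar>)"

end

theory Submission
  imports Defs "HOL-Number_Theory.Number_Theory"
begin

text \<open>
  For v in F^n let m(v) be the vector of all monomials v^kappa, kappa ranging over the
  nonzero exponent vectors. X is the sum of N independent copies of m(v) with v uniform,
  so its law is the N-fold convolution of one fixed law on the group F^K.
  Power sums over F vanish unless the exponent is a positive multiple of p - 1; this yields
  polynomials dual to the monomials, so the vectors m(v) span F^K. As m(0) = 0, every
  point of F^K is therefore a sum of exactly m = (p - 1) p^n vectors m(v), i.e. the m-fold
  convolution power gives every point probability at least delta = p^(-n m).
  Convolving with a law that dominates delta times the counting measure contracts the
  l1-distance to the uniform law by the factor 1 - p^K delta < 1 (Doeblin's argument),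
  so the distance decays geometrically along N, N + m, N + 2m, ...
\<close>

section \<open>Power sums over the prime field and a dual basis of monomials\<close>

lemma sum_powers_mod_prime_nondvd:
  fixes p e :: nat
  assumes p: "prime p" and e: "\<not> (p - 1) dvd e"
  shows "[(\<Sum>x<p. x ^ e) = 0] (mod p)"
proof -
  have p1: "p > 1" using p prime_gt_1_nat by blast
  obtain g where "residue_primroot p g" using prime_primitive_root_exists[OF p1 p] by blast
  then have cop: "coprime p g" and ord: "ord p g = p - 1"
    using p by (auto simp: residue_primroot_def totient_prime)
  define S where "S = (\<Sum>x<p. x ^ e)"
  have inj: "inj_on (\<lambda>x. (g * x) mod p) {..<p}"
  proof (rule inj_onI)
    fix x y assume x: "x \<in> {..<p}" and y: "y \<in> {..<p}" and "(g * x) mod p = (g * y) mod p"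
    then have "[x = y] (mod p)" using cop by (metis cong_def cong_mult_lcancel_nat coprime_commute)
    then show "x = y" using x y cong_less_modulus_unique_nat by auto
  qed
  then have "(\<lambda>x. (g * x) mod p) ` {..<p} = {..<p}"
    using p1 by (intro endo_inj_surj) auto
  then have "S = (\<Sum>x<p. ((g * x) mod p) ^ e)"
    unfolding S_def using sum.reindex[OF inj, of "\<lambda>x. x ^ e"] by simp
  also have "[\<dots> = (\<Sum>x<p. g ^ e * x ^ e)] (mod p)"
    by (rule cong_sum) (simp add: cong_def power_mod power_mult_distrib)
  also have "(\<Sum>x<p. g ^ e * x ^ e) = g ^ e * S" by (simp add: S_def sum_distrib_left)
  finally have gS: "[1 * S = g ^ e * S] (mod p)" by simp
  show ?thesis
  proof (rule ccontr)
    assume "\<not> ?thesis"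
    then have "coprime S p"
      using p unfolding S_def by (metis cong_0_iff coprime_commute prime_imp_coprime)
    then have "[g ^ e = 1] (mod p)" using gS cong_mult_rcancel_nat cong_sym by blast
    then show False using ord e ord_divides[of g e p] by simp
  qed
qed

lemma sum_powers_mod_prime_dvd:
  fixes p e :: nat
  assumes p: "prime p" and e: "e \<ge> 1" and d: "(p - 1) dvd e"
  shows "[(\<Sum>x<p. x ^ e) = p - 1] (mod p)"
proof -
  obtain q where q: "e = (p - 1) * q" using d by blast
  have "{..<p} = insert 0 {1..<p}" using prime_gt_1_nat[OF p] by auto
  then have "(\<Sum>x<p. x ^ e) = (\<Sum>x\<in>{1..<p}. x ^ e)" using e by simp
  also have "[\<dots> = (\<Sum>x\<in>{1..<p}. 1)] (mod p)"
  proof (rule cong_sum)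
    fix x assume "x \<in> {1..<p}"
    then have "\<not> p dvd x" by (auto dest: dvd_imp_le)
    then have "[x ^ (p - 1) = 1] (mod p)" using fermat_theorem p by blast
    then have "[(x ^ (p - 1)) ^ q = 1 ^ q] (mod p)" by (rule cong_pow)
    then show "[x ^ e = 1] (mod p)" by (simp add: q power_mult)
  qed
  finally show ?thesis by simp
qed

lemma sum_powers_mod_prime:
  fixes p e :: nat
  assumes p: "prime p"
  shows "[(\<Sum>x<p. int x ^ e) = (if e \<ge> 1 \<and> (p - 1) dvd e then -1 else 0)] (mod int p)"
proof -
  consider "e \<ge> 1 \<and> (p - 1) dvd e" | "e = 0" | "\<not> (p - 1) dvd e" by (cases "e = 0") auto
  then show ?thesis
  proof cases
    case 1
    have "[(\<Sum>x<p. x ^ e) = p - 1] (mod p)" using 1 by (intro sum_powers_mod_prime_dvd[OF p]) auto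
    then have "[int (\<Sum>x<p. x ^ e) = int (p - 1)] (mod int p)" by (simp only: cong_int_iff)
    also have "int (p - 1) = int p - 1" using prime_gt_1_nat[OF p] by simp
    also have "[int p - 1 = - 1] (mod int p)" by (simp add: cong_iff_dvd_diff)
    finally show ?thesis using 1 by simp
  next
    case 2
    then show ?thesis by (simp add: cong_0_iff)
  next
    case 3
    then have "[(\<Sum>x<p. x ^ e) = 0] (mod p)" by (rule sum_powers_mod_prime_nondvd[OF p])
    then have "[int (\<Sum>x<p. x ^ e) = int 0] (mod int p)" by (simp only: cong_int_iff)
    then show ?thesis using 3 by simp
  qed
qed

text \<open>1 - x^(p-1) is the indicator of x = 0. For k > 0, multiplying x^j by -x^(p-1-k) and
  summing over F_p keeps only j = k: the only exponent sums that survive are positive multiples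
  of p - 1.\<close>

definition monomial_dual :: "nat \<Rightarrow> nat \<Rightarrow> int \<Rightarrow> int" where
  "monomial_dual p k x = (if k = 0 then 1 - x ^ (p - 1) else - (x ^ (p - 1 - k)))"

lemma shifted_exponent_positive_multiple_iff:
  fixes p j k :: nat
  assumes "1 \<le> k" "k < p" "j < p"
  shows "(1 \<le> j + (p - 1 - k) \<and> (p - 1) dvd (j + (p - 1 - k))) \<longleftrightarrow> j = k"
proof
  assume h: "1 \<le> j + (p - 1 - k) \<and> (p - 1) dvd (j + (p - 1 - k))"
  then obtain q where q: "j + (p - 1 - k) = (p - 1) * q" by blast
  have "q \<noteq> 0" using h q by auto
  moreover have "\<not> q \<ge> 2"
  proof
    assume "q \<ge> 2"
    then have "(p - 1) * 2 \<le> (p - 1) * q" by (rule mult_le_mono2)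
    then show False using q assms by linarith
  qed
  ultimately have "j + (p - 1 - k) = p - 1" using q by (simp add: numeral_2_eq_2 not_less_eq_eq le_Suc_eq)
  then show "j = k" using assms by linarith
qed (use assms in simp)

lemma monomial_dual_orthogonal:
  fixes p k j :: nat
  assumes p: "prime p" and k: "k < p" and j: "j < p"
  shows "[(\<Sum>x<p. monomial_dual p k (int x) * int x ^ j) = (if j = k then 1 else 0)] (mod int p)"
proof (cases "k = 0")
  case True
  have "(\<Sum>x<p. monomial_dual p k (int x) * int x ^ j) =
      (\<Sum>x<p. int x ^ j) - (\<Sum>x<p. int x ^ (j + (p - 1)))"
    using True by (simp add: monomial_dual_def sum_subtractf algebra_simps flip: power_add)
  also have "[\<dots> = (if j \<ge> 1 \<and> (p - 1) dvd j then -1 else 0)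
      - (if j + (p - 1) \<ge> 1 \<and> (p - 1) dvd (j + (p - 1)) then -1 else 0)] (mod int p)"
    by (intro cong_diff sum_powers_mod_prime[OF p])
  also have "(if j \<ge> 1 \<and> (p - 1) dvd j then -1 else 0)
      - (if j + (p - 1) \<ge> 1 \<and> (p - 1) dvd (j + (p - 1)) then -1 else (0::int))
      = (if j = k then 1 else 0)"
  proof -
    have "(p - 1) dvd (j + (p - 1)) \<longleftrightarrow> (p - 1) dvd j"
      using dvd_add_left_iff[of "p - 1" "p - 1" j] by simp
    then show ?thesis using True j prime_ge_2_nat[OF p] by (cases "j = 0") auto
  qed
  finally show ?thesis .
next
  case False
  have "(\<Sum>x<p. monomial_dual p k (int x) * int x ^ j) = - (\<Sum>x<p. int x ^ (j + (p - 1 - k)))"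
    using False by (simp add: monomial_dual_def sum_negf algebra_simps power_add)
  also have "[\<dots> = - (if j + (p - 1 - k) \<ge> 1 \<and> (p - 1) dvd (j + (p - 1 - k)) then -1 else 0)] (mod int p)"
    by (intro cong_minus_minus_iff[THEN iffD2] sum_powers_mod_prime[OF p])
  also have "- (if j + (p - 1 - k) \<ge> 1 \<and> (p - 1) dvd (j + (p - 1 - k)) then -1 else 0)
      = (if j = k then 1 else (0::int))"
  proof -
    have "(1 \<le> j + (p - 1 - k) \<and> (p - 1) dvd (j + (p - 1 - k))) \<longleftrightarrow> j = k"
      using shifted_exponent_positive_multiple_iff[of k p j] False k j by simp
    then show ?thesis by (simp only:) simp
  qed
  finally show ?thesis .
qed

abbreviation points :: "nat \<Rightarrow> nat \<Rightarrow> (nat \<Rightarrow> nat) set" where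
  "points p n \<equiv> PiE {0..<n} (\<lambda>_. {0..<p})"

definition monomial :: "nat \<Rightarrow> (nat \<Rightarrow> nat) \<Rightarrow> (nat \<Rightarrow> nat) \<Rightarrow> nat" where
  "monomial n v \<kappa> = (\<Prod>i<n. v i ^ \<kappa> i)"

definition monomial_dual_prod :: "nat \<Rightarrow> nat \<Rightarrow> (nat \<Rightarrow> nat) \<Rightarrow> (nat \<Rightarrow> nat) \<Rightarrow> int" where
  "monomial_dual_prod p n \<kappa> v = (\<Prod>i<n. monomial_dual p (\<kappa> i) (int (v i)))"

lemma monomial_dual_prod_orthogonal:
  assumes p: "prime p" and \<kappa>: "\<kappa> \<in> points p n" and \<kappa>': "\<kappa>' \<in> points p n"
  shows "[(\<Sum>v\<in>points p n. monomial_dual_prod p n \<kappa>' v * int (monomial n v \<kappa>))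
          = (if \<kappa> = \<kappa>' then 1 else 0)] (mod int p)"
proof -
  have "(\<Sum>v\<in>points p n. monomial_dual_prod p n \<kappa>' v * int (monomial n v \<kappa>))
      = (\<Sum>v\<in>PiE {..<n} (\<lambda>_. {..<p}). \<Prod>i<n. monomial_dual p (\<kappa>' i) (int (v i)) * int (v i) ^ \<kappa> i)"
    by (simp add: atLeast0LessThan prod.distrib monomial_dual_prod_def monomial_def)
  also have "\<dots> = (\<Prod>i<n. \<Sum>x<p. monomial_dual p (\<kappa>' i) (int x) * int x ^ \<kappa> i)"
    by (rule prod_sum_PiE[symmetric]) auto
  also have "[\<dots> = (\<Prod>i<n. if \<kappa> i = \<kappa>' i then 1 else 0)] (mod int p)"
    by (rule cong_prod, rule monomial_dual_orthogonal[OF p]) (use \<kappa> \<kappa>' in auto)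
  also have "(\<Prod>i<n. if \<kappa> i = \<kappa>' i then 1 else (0::int)) = (if \<kappa> = \<kappa>' then 1 else 0)"
  proof (cases "\<kappa> = \<kappa>'")
    case False
    then obtain i where "i < n" "\<kappa> i \<noteq> \<kappa>' i" using PiE_ext[OF \<kappa> \<kappa>'] by auto
    then have "(\<Prod>i<n. if \<kappa> i = \<kappa>' i then 1 else (0::int)) = 0" by (intro prod_zero) auto
    then show ?thesis using False by simp
  qed simp
  finally show ?thesis .
qed

section \<open>Splitting a sample into two consecutive blocks\<close>

definition Xraw :: "nat \<Rightarrow> nat \<Rightarrow> (nat \<times> nat \<Rightarrow> nat) \<Rightarrow> (nat \<Rightarrow> nat) \<Rightarrow> nat" where
  "Xraw n N r \<kappa> = (\<Sum>j<N. \<Prod>i<n. r (i, j) ^ \<kappa> i)"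

definition sample_append ::
    "nat \<Rightarrow> nat \<Rightarrow> nat \<Rightarrow> (nat \<times> nat \<Rightarrow> nat) \<Rightarrow> (nat \<times> nat \<Rightarrow> nat) \<Rightarrow> nat \<times> nat \<Rightarrow> nat" where
  "sample_append n N M a b =
     restrict (\<lambda>(i, j). if j < N then a (i, j) else b (i, j - N)) ({0..<n} \<times> {0..<N + M})"

definition sample_take :: "nat \<Rightarrow> nat \<Rightarrow> (nat \<times> nat \<Rightarrow> nat) \<Rightarrow> nat \<times> nat \<Rightarrow> nat" where
  "sample_take n N r = restrict r ({0..<n} \<times> {0..<N})"

definition sample_drop :: "nat \<Rightarrow> nat \<Rightarrow> nat \<Rightarrow> (nat \<times> nat \<Rightarrow> nat) \<Rightarrow> nat \<times> nat \<Rightarrow> nat" where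
  "sample_drop n N M r = restrict (\<lambda>(i, j). r (i, N + j)) ({0..<n} \<times> {0..<M})"

lemma Xvec_eq_Xraw: "Xvec p n N r = restrict (\<lambda>\<kappa>. Xraw n N r \<kappa> mod p) (exps p n)"
  by (simp add: Xvec_def Xraw_def)

lemma finite_samples: "finite (samples p n N)"
  unfolding samples_def by (intro finite_PiE) auto

lemma card_samples: "card (samples p n N) = p ^ (n * N)"
  unfolding samples_def by (simp add: card_PiE card_cartesian_product)

lemma sample_append_in_samples:
  "a \<in> samples p n N \<Longrightarrow> b \<in> samples p n M \<Longrightarrow> sample_append n N M a b \<in> samples p n (N + M)"
  unfolding samples_def sample_append_def by (auto simp: PiE_iff)

lemma sample_take_in_samples: "r \<in> samples p n (N + M) \<Longrightarrow> sample_take n N r \<in> samples p n N"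
  unfolding samples_def sample_take_def by (auto simp: PiE_iff)

lemma sample_drop_in_samples: "r \<in> samples p n (N + M) \<Longrightarrow> sample_drop n N M r \<in> samples p n M"
  unfolding samples_def sample_drop_def by (auto simp: PiE_iff)

lemma sample_append_take_drop:
  assumes r: "r \<in> samples p n (N + M)"
  shows "sample_append n N M (sample_take n N r) (sample_drop n N M r) = r"
proof -
  have "sample_append n N M (sample_take n N r) (sample_drop n N M r) \<in> samples p n (N + M)"
    using r by (intro sample_append_in_samples sample_take_in_samples sample_drop_in_samples)
  from this r show ?thesis
    unfolding samples_def by (rule PiE_ext) (auto simp: sample_append_def sample_take_def sample_drop_def)
qed

lemma sample_take_append:
  assumes a: "a \<in> samples p n N"
  shows "sample_take n N (sample_append n N M a b) = a"
  by (rule PiE_ext[OF _ a[unfolded samples_def]])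
    (use a in \<open>auto simp: sample_take_def sample_append_def PiE_iff samples_def\<close>)

lemma sample_drop_append:
  assumes b: "b \<in> samples p n M"
  shows "sample_drop n N M (sample_append n N M a b) = b"
  by (rule PiE_ext[OF _ b[unfolded samples_def]])
    (use b in \<open>auto simp: sample_drop_def sample_append_def PiE_iff samples_def\<close>)

lemma Xraw_append:
  "Xraw n (N + M) (sample_append n N M a b) \<kappa> = Xraw n N a \<kappa> + Xraw n M b \<kappa>"
proof -
  have split: "(\<Sum>j<N + M. g j) = (\<Sum>j<N. g j) + (\<Sum>j<M. g (N + j))" for g :: "nat \<Rightarrow> nat"
    by (induction M) (simp_all add: add.assoc)
  show ?thesis
    unfolding Xraw_def split
    by (intro arg_cong2[where f = "(+)"] sum.cong prod.cong) (auto simp: sample_append_def)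
qed

section \<open>Every target vector is attained with \<open>(p - 1) p\<^sup>n\<close> sample points\<close>

definition reachable :: "nat \<Rightarrow> nat \<Rightarrow> nat \<Rightarrow> ((nat \<Rightarrow> nat) \<Rightarrow> nat) \<Rightarrow> bool" where
  "reachable p n N w \<longleftrightarrow> (\<exists>r\<in>samples p n N. \<forall>\<kappa>\<in>exps p n. [Xraw n N r \<kappa> = w \<kappa>] (mod p))"

lemma reachable_add:
  assumes "reachable p n N w" "reachable p n M w'"
  shows "reachable p n (N + M) (\<lambda>\<kappa>. w \<kappa> + w' \<kappa>)"
proof -
  obtain a where a: "a \<in> samples p n N" "\<forall>\<kappa>\<in>exps p n. [Xraw n N a \<kappa> = w \<kappa>] (mod p)"
    using assms(1) unfolding reachable_def by blast
  obtain b where b: "b \<in> samples p n M" "\<forall>\<kappa>\<in>exps p n. [Xraw n M b \<kappa> = w' \<kappa>] (mod p)"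
    using assms(2) unfolding reachable_def by blast
  have "\<forall>\<kappa>\<in>exps p n. [Xraw n (N + M) (sample_append n N M a b) \<kappa> = w \<kappa> + w' \<kappa>] (mod p)"
    using a(2) b(2) by (simp add: Xraw_append cong_add)
  then show ?thesis unfolding reachable_def using sample_append_in_samples[OF a(1) b(1)] by blast
qed

lemma exps_nonzero:
  assumes "\<kappa> \<in> exps p n"
  shows "\<exists>i<n. \<kappa> i \<noteq> 0"
proof (rule ccontr)
  assume "\<not> ?thesis"
  then have "\<kappa> = restrict (\<lambda>_. 0) {0..<n}"
    using assms unfolding exps_def by (intro PiE_ext[of _ "{0..<n}" "\<lambda>_. {0..<p}"]) auto
  then show False using assms unfolding exps_def by blast
qed

lemma reachable_zero:
  assumes "p > 0"
  shows "reachable p n N (\<lambda>_. 0)"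
proof -
  define r where "r = restrict (\<lambda>_::nat \<times> nat. 0::nat) ({0..<n} \<times> {0..<N})"
  have "r \<in> samples p n N" unfolding r_def samples_def using assms by (simp add: PiE_iff)
  moreover have "Xraw n N r \<kappa> = 0" if \<kappa>: "\<kappa> \<in> exps p n" for \<kappa>
  proof -
    obtain i where i: "i < n" "\<kappa> i \<noteq> 0" using exps_nonzero[OF \<kappa>] by blast
    have "(\<Prod>i<n. r (i, j) ^ \<kappa> i) = 0" if "j < N" for j
      using i that by (intro prod_zero) (auto simp: r_def)
    then show ?thesis unfolding Xraw_def by simp
  qed
  ultimately show ?thesis unfolding reachable_def by (metis cong_refl)
qed

lemma reachable_mono:
  assumes "reachable p n N w" "N \<le> M" "p > 0"
  shows "reachable p n M w"
  using reachable_add[OF assms(1) reachable_zero[OF assms(3)], of "M - N"] assms(2) by simp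

lemma reachable_monomial:
  assumes "v \<in> points p n"
  shows "reachable p n 1 (monomial n v)"
proof -
  define r where "r = restrict (\<lambda>(i, j::nat). v i) ({0..<n} \<times> {0..<1})"
  have "r \<in> samples p n 1" unfolding r_def samples_def using assms by (auto simp: PiE_iff)
  moreover have "Xraw n 1 r = monomial n v" by (simp add: fun_eq_iff Xraw_def monomial_def r_def)
  ultimately show ?thesis unfolding reachable_def by (metis cong_refl)
qed

lemma reachable_mult_monomial:
  assumes "v \<in> points p n" "p > 0"
  shows "reachable p n k (\<lambda>\<kappa>. k * monomial n v \<kappa>)"
proof (induction k)
  case 0
  show ?case using reachable_zero[OF assms(2)] by simp
next
  case (Suc k)
  show ?case using reachable_add[OF Suc reachable_monomial[OF assms(1)]] by (simp add: add.commute)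
qed

lemma reachable_sum_monomials:
  assumes "p > 0" "finite W" "W \<subseteq> points p n" "\<And>v. v \<in> W \<Longrightarrow> c v < p"
  shows "reachable p n ((p - 1) * card W) (\<lambda>\<kappa>. \<Sum>v\<in>W. c v * monomial n v \<kappa>)"
  using assms(2-4)
proof (induction W rule: finite_induct)
  case empty
  show ?case using reachable_zero[OF assms(1)] by simp
next
  case (insert v W)
  have "c v \<le> p - 1" "v \<in> points p n" using insert.prems by fastforce+
  then have "reachable p n (p - 1) (\<lambda>\<kappa>. c v * monomial n v \<kappa>)"
    using reachable_mono[OF reachable_mult_monomial _ assms(1)] assms(1) by blast
  moreover have "reachable p n ((p - 1) * card W) (\<lambda>\<kappa>. \<Sum>v\<in>W. c v * monomial n v \<kappa>)"
    using insert.IH insert.prems by blast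
  ultimately show ?case using reachable_add insert.hyps by (fastforce simp: add.commute)
qed

lemma monomial_interpolation:
  assumes p: "prime p" and z: "z \<in> target p n" and \<kappa>: "\<kappa> \<in> exps p n"
  shows "[(\<Sum>v\<in>points p n. (\<Sum>\<kappa>'\<in>exps p n. int (z \<kappa>') * monomial_dual_prod p n \<kappa>' v)
            * int (monomial n v \<kappa>)) = int (z \<kappa>)] (mod int p)"
proof -
  have "(\<Sum>v\<in>points p n. (\<Sum>\<kappa>'\<in>exps p n. int (z \<kappa>') * monomial_dual_prod p n \<kappa>' v)
            * int (monomial n v \<kappa>))
      = (\<Sum>\<kappa>'\<in>exps p n. int (z \<kappa>') *
            (\<Sum>v\<in>points p n. monomial_dual_prod p n \<kappa>' v * int (monomial n v \<kappa>)))"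
    by (simp add: sum_distrib_right sum_distrib_left mult.assoc sum.swap[of _ "points p n"])
  also have "[\<dots> = (\<Sum>\<kappa>'\<in>exps p n. int (z \<kappa>') * (if \<kappa> = \<kappa>' then 1 else 0))] (mod int p)"
    using \<kappa> by (intro cong_sum cong_scalar_left monomial_dual_prod_orthogonal[OF p])
      (auto simp: exps_def)
  also have "(\<Sum>\<kappa>'\<in>exps p n. int (z \<kappa>') * (if \<kappa> = \<kappa>' then 1 else 0))
      = (\<Sum>\<kappa>'\<in>exps p n. if \<kappa> = \<kappa>' then int (z \<kappa>') else 0)"
    by (intro sum.cong) auto
  also have "\<dots> = int (z \<kappa>)"
  proof -
    have "finite (exps p n)" unfolding exps_def by (intro finite_Diff finite_PiE) auto
    then show ?thesis using \<kappa> by simp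
  qed
  finally show ?thesis .
qed

lemma Xvec_surj:
  assumes p: "prime p" and z: "z \<in> target p n"
  shows "\<exists>r\<in>samples p n ((p - 1) * p ^ n). Xvec p n ((p - 1) * p ^ n) r = z"
proof -
  have p0: "p > 0" using p prime_gt_0_nat by blast
  define c where "c v = nat ((\<Sum>\<kappa>'\<in>exps p n. int (z \<kappa>') * monomial_dual_prod p n \<kappa>' v) mod int p)"
    for v
  have c: "int (c v) = (\<Sum>\<kappa>'\<in>exps p n. int (z \<kappa>') * monomial_dual_prod p n \<kappa>' v) mod int p" for v
    unfolding c_def using p0 by simp
  have "c v < p" for v using c[of v] p0 by (metis of_nat_less_iff pos_mod_bound of_nat_0_less_iff)
  then have "reachable p n ((p - 1) * card (points p n)) (\<lambda>\<kappa>. \<Sum>v\<in>points p n. c v * monomial n v \<kappa>)"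
    using p0 by (intro reachable_sum_monomials) (auto intro: finite_PiE)
  then obtain r where r: "r \<in> samples p n ((p - 1) * p ^ n)"
    and r_cong: "\<And>\<kappa>. \<kappa> \<in> exps p n \<Longrightarrow>
      [Xraw n ((p - 1) * p ^ n) r \<kappa> = (\<Sum>v\<in>points p n. c v * monomial n v \<kappa>)] (mod p)"
    unfolding reachable_def by (auto simp: card_PiE)
  have "[Xraw n ((p - 1) * p ^ n) r \<kappa> = z \<kappa>] (mod p)" if \<kappa>: "\<kappa> \<in> exps p n" for \<kappa>
  proof -
    have "[int (\<Sum>v\<in>points p n. c v * monomial n v \<kappa>)
        = (\<Sum>v\<in>points p n. (\<Sum>\<kappa>'\<in>exps p n. int (z \<kappa>') * monomial_dual_prod p n \<kappa>' v)
            * int (monomial n v \<kappa>))] (mod int p)"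
      unfolding of_nat_sum of_nat_mult by (intro cong_sum cong_scalar_right) (simp add: c cong_def)
    also have "[(\<Sum>v\<in>points p n. (\<Sum>\<kappa>'\<in>exps p n. int (z \<kappa>') * monomial_dual_prod p n \<kappa>' v)
            * int (monomial n v \<kappa>)) = int (z \<kappa>)] (mod int p)"
      by (rule monomial_interpolation[OF p z \<kappa>])
    finally have "[(\<Sum>v\<in>points p n. c v * monomial n v \<kappa>) = z \<kappa>] (mod p)"
      by (simp only: cong_int_iff)
    then show ?thesis using r_cong[OF \<kappa>] cong_trans by blast
  qed
  moreover have "z \<kappa> < p" if "\<kappa> \<in> exps p n" for \<kappa>
    using z that by (auto simp: target_def PiE_iff)
  ultimately have "Xvec p n ((p - 1) * p ^ n) r = z"
    using z unfolding target_def Xvec_eq_Xraw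
    by (intro PiE_ext[of _ "exps p n" "\<lambda>_. {0..<p}"]) (auto simp: cong_def PiE_iff)
  then show ?thesis using r by blast
qed

section \<open>The law of \<open>X\<close> as a convolution on the target group\<close>

definition vadd :: "nat \<Rightarrow> nat \<Rightarrow> ((nat \<Rightarrow> nat) \<Rightarrow> nat) \<Rightarrow> ((nat \<Rightarrow> nat) \<Rightarrow> nat) \<Rightarrow> (nat \<Rightarrow> nat) \<Rightarrow> nat" where
  "vadd p n x y = restrict (\<lambda>\<kappa>. (x \<kappa> + y \<kappa>) mod p) (exps p n)"

definition vsub :: "nat \<Rightarrow> nat \<Rightarrow> ((nat \<Rightarrow> nat) \<Rightarrow> nat) \<Rightarrow> ((nat \<Rightarrow> nat) \<Rightarrow> nat) \<Rightarrow> (nat \<Rightarrow> nat) \<Rightarrow> nat" where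
  "vsub p n x y = restrict (\<lambda>\<kappa>. (x \<kappa> + (p - y \<kappa>)) mod p) (exps p n)"

lemma vadd_in_target: "p > 0 \<Longrightarrow> vadd p n x y \<in> target p n"
  unfolding vadd_def target_def by (simp add: PiE_iff)

lemma vsub_in_target: "p > 0 \<Longrightarrow> vsub p n x y \<in> target p n"
  unfolding vsub_def target_def by (simp add: PiE_iff)

lemma restrict_eq_PiE_iff: "x \<in> PiE A B \<Longrightarrow> restrict f A = x \<longleftrightarrow> (\<forall>a\<in>A. f a = x a)"
  by (metis PiE_restrict restrict_apply' restrict_ext)

lemma add_mod_eq_iff:
  fixes u w x p :: nat
  assumes "u < p" "w < p" "x < p"
  shows "(u + w) mod p = x \<longleftrightarrow> w = (x + (p - u)) mod p"
proof -
  have "(u + w) mod p = x \<longleftrightarrow> [u + w = u + (x + (p - u))] (mod p)"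
    using assms by (simp add: cong_def)
  also have "\<dots> \<longleftrightarrow> w = (x + (p - u)) mod p"
    using assms by (simp only: cong_add_lcancel_nat) (simp add: cong_def)
  finally show ?thesis .
qed

lemma vadd_eq_iff:
  assumes u: "u \<in> target p n" and w: "w \<in> target p n" and x: "x \<in> target p n"
  shows "vadd p n u w = x \<longleftrightarrow> w = vsub p n x u"
proof -
  have "vadd p n u w = x \<longleftrightarrow> (\<forall>\<kappa>\<in>exps p n. (u \<kappa> + w \<kappa>) mod p = x \<kappa>)"
    using x unfolding vadd_def target_def by (rule restrict_eq_PiE_iff)
  also have "\<dots> \<longleftrightarrow> (\<forall>\<kappa>\<in>exps p n. (x \<kappa> + (p - u \<kappa>)) mod p = w \<kappa>)"
    using u w x by (auto simp: target_def PiE_iff add_mod_eq_iff)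
  also have "\<dots> \<longleftrightarrow> vsub p n x u = w"
    using w unfolding vsub_def target_def by (rule restrict_eq_PiE_iff[symmetric])
  finally show ?thesis by auto
qed

lemma vadd_commute: "vadd p n x y = vadd p n y x"
  by (simp add: vadd_def add.commute)

lemma bij_betw_vsub_left:
  assumes p: "p > 0" and y: "y \<in> target p n"
  shows "bij_betw (\<lambda>x. vsub p n x y) (target p n) (target p n)"
proof (rule bij_betw_byWitness[where f' = "vadd p n y"])
  show "\<forall>x\<in>target p n. vadd p n y (vsub p n x y) = x"
    using vadd_eq_iff[OF y vsub_in_target[OF p]] by blast
  show "\<forall>w\<in>target p n. vsub p n (vadd p n y w) y = w"
  proof
    fix w assume "w \<in> target p n"
    from vadd_eq_iff[OF y this vadd_in_target[OF p, of n y w]]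
    show "vsub p n (vadd p n y w) y = w" by simp
  qed
qed (use vadd_in_target[OF p] vsub_in_target[OF p] in blast)+

lemma bij_betw_vsub_right:
  assumes p: "p > 0" and x: "x \<in> target p n"
  shows "bij_betw (vsub p n x) (target p n) (target p n)"
proof (rule bij_betw_byWitness[where f' = "vsub p n x"])
  show "\<forall>y\<in>target p n. vsub p n x (vsub p n x y) = y"
  proof
    fix y assume y: "y \<in> target p n"
    have "vadd p n y (vsub p n x y) = x" using vadd_eq_iff[OF y vsub_in_target[OF p] x] by blast
    then show "vsub p n x (vsub p n x y) = y"
      using vadd_eq_iff[OF vsub_in_target[OF p] y x] by (simp add: vadd_commute)
  qed
  then show "\<forall>y\<in>target p n. vsub p n x (vsub p n x y) = y" .
qed (use vsub_in_target[OF p] in blast)+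

lemma finite_target: "finite (target p n)"
  unfolding target_def exps_def by (intro finite_PiE finite_Diff) auto

lemma target_nonempty: "p > 0 \<Longrightarrow> target p n \<noteq> {}"
  unfolding target_def by (auto simp: PiE_eq_empty_iff)

lemma Xvec_in_target: "p > 0 \<Longrightarrow> Xvec p n N r \<in> target p n"
  unfolding Xvec_def target_def by (simp add: PiE_iff)

lemma Xvec_append:
  "Xvec p n (N + M) (sample_append n N M a b) = vadd p n (Xvec p n N a) (Xvec p n M b)"
  unfolding Xvec_eq_Xraw vadd_def Xraw_append by (intro restrict_ext) (simp add: mod_add_eq)

lemma sum_card_fibers:
  fixes g :: "'b \<Rightarrow> 'c::comm_semiring_1"
  assumes "finite S" "finite G" "f ` S \<subseteq> G"
  shows "(\<Sum>a\<in>S. g (f a)) = (\<Sum>y\<in>G. of_nat (card {a\<in>S. f a = y}) * g y)"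
proof -
  have "(\<Sum>a\<in>S. g (f a)) = (\<Sum>y\<in>G. \<Sum>a\<in>{a\<in>S. f a = y}. g (f a))"
    using sum.group[OF assms, of "\<lambda>a. g (f a)"] by simp
  also have "\<dots> = (\<Sum>y\<in>G. of_nat (card {a\<in>S. f a = y}) * g y)"
  proof (rule sum.cong[OF refl])
    fix y
    have "(\<Sum>a\<in>{a\<in>S. f a = y}. g (f a)) = (\<Sum>a\<in>{a\<in>S. f a = y}. g y)"
      by (rule sum.cong) auto
    then show "(\<Sum>a\<in>{a\<in>S. f a = y}. g (f a)) = of_nat (card {a\<in>S. f a = y}) * g y"
      by simp
  qed
  finally show ?thesis .
qed

lemma card_fiber_add:
  assumes p: "p > 0" and x: "x \<in> target p n"
  shows "card {r \<in> samples p n (N + M). Xvec p n (N + M) r = x}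
       = (\<Sum>y\<in>target p n. card {a \<in> samples p n N. Xvec p n N a = y}
                          * card {b \<in> samples p n M. Xvec p n M b = vsub p n x y})"
proof -
  let ?B = "\<lambda>a. {b \<in> samples p n M. Xvec p n M b = vsub p n x (Xvec p n N a)}"
  have "bij_betw (\<lambda>(a, b). sample_append n N M a b) (Sigma (samples p n N) ?B)
          {r \<in> samples p n (N + M). Xvec p n (N + M) r = x}"
  proof (rule bij_betw_byWitness[where f' = "\<lambda>r. (sample_take n N r, sample_drop n N M r)"])
    have eq: "Xvec p n (N + M) (sample_append n N M a b) = x \<longleftrightarrow> Xvec p n M b = vsub p n x (Xvec p n N a)"
      for a b
      unfolding Xvec_append by (rule vadd_eq_iff[OF Xvec_in_target[OF p] Xvec_in_target[OF p] x])
    show "\<forall>ab\<in>Sigma (samples p n N) ?B.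
        (sample_take n N (case ab of (a, b) \<Rightarrow> sample_append n N M a b),
         sample_drop n N M (case ab of (a, b) \<Rightarrow> sample_append n N M a b)) = ab"
      by (auto simp: sample_take_append sample_drop_append)
    show "\<forall>r\<in>{r \<in> samples p n (N + M). Xvec p n (N + M) r = x}.
        (case (sample_take n N r, sample_drop n N M r) of (a, b) \<Rightarrow> sample_append n N M a b) = r"
      by (auto simp: sample_append_take_drop)
    show "(\<lambda>(a, b). sample_append n N M a b) ` Sigma (samples p n N) ?B
        \<subseteq> {r \<in> samples p n (N + M). Xvec p n (N + M) r = x}"
      using eq by (auto intro: sample_append_in_samples)
    show "(\<lambda>r. (sample_take n N r, sample_drop n N M r)) ` {r \<in> samples p n (N + M). Xvec p n (N + M) r = x}
        \<subseteq> Sigma (samples p n N) ?B"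
    proof
      fix ab assume "ab \<in> (\<lambda>r. (sample_take n N r, sample_drop n N M r))
                          ` {r \<in> samples p n (N + M). Xvec p n (N + M) r = x}"
      then obtain r where r: "r \<in> samples p n (N + M)" "Xvec p n (N + M) r = x"
        and ab: "ab = (sample_take n N r, sample_drop n N M r)" by blast
      have "Xvec p n M (sample_drop n N M r) = vsub p n x (Xvec p n N (sample_take n N r))"
        using eq[of "sample_take n N r" "sample_drop n N M r"] r by (simp add: sample_append_take_drop)
      then show "ab \<in> Sigma (samples p n N) ?B"
        using r ab by (simp add: sample_take_in_samples sample_drop_in_samples)
    qed
  qed
  then have "card {r \<in> samples p n (N + M). Xvec p n (N + M) r = x} = card (Sigma (samples p n N) ?B)"
    by (simp add: bij_betw_same_card)
  also have "\<dots> = (\<Sum>a\<in>samples p n N. card (?B a))"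
    by (rule card_SigmaI) (auto simp: finite_samples)
  also have "\<dots> = (\<Sum>y\<in>target p n. of_nat (card {a \<in> samples p n N. Xvec p n N a = y})
                          * card {b \<in> samples p n M. Xvec p n M b = vsub p n x y})"
    by (rule sum_card_fibers[OF finite_samples finite_target]) (use Xvec_in_target[OF p] in blast)
  finally show ?thesis by simp
qed

lemma pmf_distP:
  assumes "p > 0"
  shows "pmf (distP p n N) x = card {r \<in> samples p n N. Xvec p n N r = x} / p ^ (n * N)"
proof -
  have "samples p n N \<noteq> {}" using card_samples[of p n N] assms by force
  then have "pmf (distP p n N) x = card (samples p n N \<inter> Xvec p n N -` {x}) / card (samples p n N)"
    unfolding distP_def pmf_map by (rule measure_pmf_of_set[OF _ finite_samples])
  also have "samples p n N \<inter> Xvec p n N -` {x} = {r \<in> samples p n N. Xvec p n N r = x}" by auto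
  finally show ?thesis by (simp add: card_samples)
qed

lemma pmf_distP_add:
  assumes p: "p > 0" and x: "x \<in> target p n"
  shows "pmf (distP p n (N + M)) x
       = (\<Sum>y\<in>target p n. pmf (distP p n N) y * pmf (distP p n M) (vsub p n x y))"
  unfolding pmf_distP[OF p] card_fiber_add[OF p x]
  by (simp add: sum_divide_distrib add_mult_distrib2 power_add)

lemma sum_pmf_distP: "p > 0 \<Longrightarrow> (\<Sum>y\<in>target p n. pmf (distP p n N) y) = 1"
  by (rule sum_pmf_eq_1[OF finite_target])
    (auto simp: distP_def set_pmf_of_set finite_samples card_samples Xvec_in_target
      simp flip: card_gt_0_iff)

lemma pmf_distP_lower_bound:
  assumes p: "prime p" and z: "z \<in> target p n"
  shows "pmf (distP p n ((p - 1) * p ^ n)) z \<ge> 1 / p ^ (n * ((p - 1) * p ^ n))"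
proof -
  let ?m = "(p - 1) * p ^ n"
  have "{r \<in> samples p n ?m. Xvec p n ?m r = z} \<noteq> {}" using Xvec_surj[OF p z] by blast
  then have "card {r \<in> samples p n ?m. Xvec p n ?m r = z} \<ge> 1"
    using finite_samples by (simp add: Suc_le_eq card_gt_0_iff)
  then show ?thesis using p prime_gt_0_nat by (simp add: pmf_distP divide_right_mono)
qed

lemma card_target_le:
  assumes "prime p"
  shows "card (target p n) \<le> p ^ (n * ((p - 1) * p ^ n))"
proof -
  have "target p n \<subseteq> Xvec p n ((p - 1) * p ^ n) ` samples p n ((p - 1) * p ^ n)"
    using Xvec_surj[OF assms] by blast
  then show ?thesis
    using surj_card_le[OF finite_samples] by (simp add: card_samples)
qed

lemma l1_dist_eq:
  assumes "p > 0"
  shows "l1_dist p n N = (\<Sum>x\<in>target p n. \<bar>pmf (distP p n N) x - 1 / card (target p n)\<bar>)"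
  unfolding l1_dist_def distU_def using assms
  by (intro sum.cong refl) (simp add: finite_target target_nonempty)

lemma l1_dist_le_2:
  assumes "p > 0"
  shows "l1_dist p n N \<le> 2"
proof -
  have "l1_dist p n N \<le> (\<Sum>x\<in>target p n. pmf (distP p n N) x + 1 / card (target p n))"
    unfolding l1_dist_eq[OF assms] by (intro sum_mono) (simp add: abs_le_iff)
  also have "\<dots> = 2"
    using assms finite_target target_nonempty by (simp add: sum.distrib sum_pmf_distP)
  finally show ?thesis .
qed

section \<open>Contraction towards the uniform law\<close>

lemma doeblin_contraction:
  fixes f K :: "'a \<Rightarrow> real" and sub :: "'a \<Rightarrow> 'a \<Rightarrow> 'a" and \<delta> :: real
  assumes fin: "finite G" and ne: "G \<noteq> {}"
    and sub: "\<And>x y. x \<in> G \<Longrightarrow> y \<in> G \<Longrightarrow> sub x y \<in> G"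
    and K_sum_left: "\<And>y. y \<in> G \<Longrightarrow> (\<Sum>x\<in>G. K (sub x y)) = 1"
    and K_sum_right: "\<And>x. x \<in> G \<Longrightarrow> (\<Sum>y\<in>G. K (sub x y)) = 1"
    and K_ge: "\<And>z. z \<in> G \<Longrightarrow> K z \<ge> \<delta>"
    and f_sum: "(\<Sum>y\<in>G. f y) = 1"
  shows "(\<Sum>x\<in>G. \<bar>(\<Sum>y\<in>G. f y * K (sub x y)) - 1 / card G\<bar>)
           \<le> (1 - card G * \<delta>) * (\<Sum>y\<in>G. \<bar>f y - 1 / card G\<bar>)"
proof -
  define u where "u = 1 / real (card G)"
  have "real (card G) * u = 1" unfolding u_def using fin ne by simp
  then have f_u: "(\<Sum>y\<in>G. f y - u) = 0" using f_sum by (simp add: sum_subtractf)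
  text \<open>Both \<open>f\<close> and \<open>u\<close> have total mass one, so subtracting \<open>\<delta>\<close> from the kernel changes nothing
    but makes it nonnegative.\<close>
  have eq: "(\<Sum>y\<in>G. f y * K (sub x y)) - u = (\<Sum>y\<in>G. (f y - u) * (K (sub x y) - \<delta>))"
    if x: "x \<in> G" for x
  proof -
    have "(\<Sum>y\<in>G. (f y - u) * (K (sub x y) - \<delta>))
        = (\<Sum>y\<in>G. f y * K (sub x y) - u * K (sub x y) - \<delta> * (f y - u))"
      by (intro sum.cong refl) (simp add: algebra_simps)
    also have "\<dots> = (\<Sum>y\<in>G. f y * K (sub x y)) - u * (\<Sum>y\<in>G. K (sub x y))
        - \<delta> * (\<Sum>y\<in>G. f y - u)"
      by (simp add: sum_subtractf sum_distrib_left right_diff_distrib)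
    finally show ?thesis using K_sum_right[OF x] f_u by simp
  qed
  have "(\<Sum>x\<in>G. \<bar>(\<Sum>y\<in>G. f y * K (sub x y)) - u\<bar>)
      \<le> (\<Sum>x\<in>G. \<Sum>y\<in>G. \<bar>f y - u\<bar> * (K (sub x y) - \<delta>))"
  proof (rule sum_mono)
    fix x assume x: "x \<in> G"
    have "\<bar>(\<Sum>y\<in>G. f y * K (sub x y)) - u\<bar> \<le> (\<Sum>y\<in>G. \<bar>(f y - u) * (K (sub x y) - \<delta>)\<bar>)"
      unfolding eq[OF x] by (rule sum_abs)
    also have "\<dots> = (\<Sum>y\<in>G. \<bar>f y - u\<bar> * (K (sub x y) - \<delta>))"
      using K_ge sub x by (intro sum.cong refl) (simp add: abs_mult)
    finally show "\<bar>(\<Sum>y\<in>G. f y * K (sub x y)) - u\<bar> \<le> (\<Sum>y\<in>G. \<bar>f y - u\<bar> * (K (sub x y) - \<delta>))" .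
  qed
  also have "\<dots> = (\<Sum>y\<in>G. \<bar>f y - u\<bar> * (\<Sum>x\<in>G. K (sub x y) - \<delta>))"
    by (subst sum.swap) (simp add: sum_distrib_left)
  also have "\<dots> = (1 - card G * \<delta>) * (\<Sum>y\<in>G. \<bar>f y - u\<bar>)"
    by (simp add: sum_subtractf K_sum_left sum_distrib_left mult.commute)
  finally show ?thesis unfolding u_def .
qed

lemma iterate_contraction:
  fixes D :: "nat \<Rightarrow> real"
  assumes "0 \<le> \<theta>" and step: "\<And>N. D (N + m) \<le> \<theta> * D N" and bound: "\<And>N. D N \<le> C"
  shows "D N \<le> C * \<theta> ^ (N div m)"
proof -
  have "D (r + q * m) \<le> C * \<theta> ^ q" for r q
  proof (induction q)
    case 0
    show ?case using bound by simp
  next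
    case (Suc q)
    have "D (r + Suc q * m) \<le> \<theta> * D (r + q * m)"
      using step[of "r + q * m"] by (simp add: algebra_simps)
    also have "\<dots> \<le> \<theta> * (C * \<theta> ^ q)" using Suc assms(1) by (rule mult_left_mono)
    finally show ?case by (simp add: algebra_simps)
  qed
  from this[of "N mod m" "N div m"] show ?thesis by (simp add: mod_div_mult_eq)
qed

lemma exp_decay_of_block_geometric:
  fixes D :: "nat \<Rightarrow> real"
  assumes "0 \<le> \<theta>" "\<theta> < 1" "m > 0" "C > 0" and D: "\<And>N. D N \<le> C * \<theta> ^ (N div m)"
  shows "\<exists>c>0. \<exists>N0. \<forall>N\<ge>N0. D N \<le> exp (- c * real N)"
proof -
  define t where "t = max \<theta> (1/2)"
  have t: "0 < t" "t < 1" "\<theta> \<le> t" using assms(2) by (auto simp: t_def)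
  define a where "a = - ln t"
  have a: "a > 0" unfolding a_def using t by simp
  define c where "c = a / (2 * real m)"
  have c: "c > 0" unfolding c_def using a assms(3) by simp
  have "D N \<le> exp (- c * real N)" if N: "N \<ge> nat \<lceil>(ln C + a) / c\<rceil>" for N
  proof -
    define q where "q = N div m"
    have "N < q * m + m"
      using div_mult_mod_eq[of N m] mod_less_divisor[OF assms(3), of N] unfolding q_def by linarith
    then have "real N < real q * real m + real m" by (metis of_nat_add of_nat_less_iff of_nat_mult)
    then have q: "real N / real m - 1 \<le> real q" using assms(3) by (simp add: field_simps)
    text \<open>Each block of \<open>m\<close> steps gains the factor \<open>t = exp (-a)\<close>; half of that exponent pays
      for the remainder block and the constant \<open>C\<close>.\<close>
    have "\<theta> ^ q \<le> exp (- a * real q)"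
      using power_mono[OF t(3) assms(1), of q] t(1) by (simp add: a_def exp_of_nat_mult mult.commute)
    also have "\<dots> \<le> exp (a - 2 * c * real N)"
    proof -
      have "a * (real N / real m - 1) \<le> a * real q" using q a by (intro mult_left_mono) auto
      moreover have "2 * c * real N = a * (real N / real m)" by (simp add: c_def)
      ultimately show ?thesis by (simp add: algebra_simps)
    qed
    finally have "D N \<le> C * exp (a - 2 * c * real N)"
      using D[of N] assms(4) unfolding q_def by (meson mult_left_mono less_imp_le order_trans)
    also have "\<dots> = exp (ln C + a - 2 * c * real N)" using assms(4) by (simp add: exp_add exp_diff)
    also have "\<dots> \<le> exp (- c * real N)"
    proof -
      have "(ln C + a) / c \<le> real N" using N by linarith
      then show ?thesis using c by (simp add: field_simps)
    qed
    finally show ?thesis .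
  qed
  then show ?thesis using c by blast
qed

lemma l1_dist_contraction:
  fixes p n N :: nat
  assumes p: "prime p"
  defines "m \<equiv> (p - 1) * p ^ n"
  shows "l1_dist p n (N + m) \<le> (1 - real (card (target p n)) / real p ^ (n * m)) * l1_dist p n N"
proof -
  have p0: "p > 0" using p prime_gt_0_nat by blast
  let ?T = "target p n" and ?u = "1 / real (card (target p n))"
  have "(\<Sum>x\<in>?T. \<bar>(\<Sum>y\<in>?T. pmf (distP p n N) y * pmf (distP p n m) (vsub p n x y)) - ?u\<bar>)
      \<le> (1 - card ?T * (1 / real p ^ (n * m))) * (\<Sum>y\<in>?T. \<bar>pmf (distP p n N) y - ?u\<bar>)"
  proof (rule doeblin_contraction[OF finite_target target_nonempty[OF p0], where sub = "vsub p n"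
        and K = "pmf (distP p n m)" and f = "pmf (distP p n N)" and \<delta> = "1 / real p ^ (n * m)"])
    show "(\<Sum>x\<in>?T. pmf (distP p n m) (vsub p n x y)) = 1" if "y \<in> ?T" for y
      using sum.reindex_bij_betw[OF bij_betw_vsub_left[OF p0 that], of "pmf (distP p n m)"]
      by (simp add: sum_pmf_distP[OF p0])
    show "(\<Sum>y\<in>?T. pmf (distP p n m) (vsub p n x y)) = 1" if "x \<in> ?T" for x
      using sum.reindex_bij_betw[OF bij_betw_vsub_right[OF p0 that], of "pmf (distP p n m)"]
      by (simp add: sum_pmf_distP[OF p0])
    show "1 / real p ^ (n * m) \<le> pmf (distP p n m) z" if "z \<in> ?T" for z
      using pmf_distP_lower_bound[OF p that] unfolding m_def .
  qed (simp_all add: vsub_in_target[OF p0] sum_pmf_distP[OF p0])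
  moreover have "l1_dist p n (N + m)
      = (\<Sum>x\<in>?T. \<bar>(\<Sum>y\<in>?T. pmf (distP p n N) y * pmf (distP p n m) (vsub p n x y)) - ?u\<bar>)"
    unfolding l1_dist_eq[OF p0] by (intro sum.cong refl) (simp add: pmf_distP_add[OF p0])
  ultimately show ?thesis unfolding l1_dist_eq[OF p0] by simp
qed

theorem proposition2p9:
  fixes p n :: nat
  assumes "prime p" and "n \<ge> 1"
  shows "\<exists>c::real. c > 0 \<and> (\<exists>N0::nat. \<forall>N\<ge>N0. l1_dist p n N \<le> exp (- c * real N))"
proof -
  have p: "p > 0" using assms(1) prime_gt_0_nat by blast
  define m where "m = (p - 1) * p ^ n"
  define \<theta> where "\<theta> = 1 - real (card (target p n)) / real p ^ (n * m)"
  have "m > 0" unfolding m_def using prime_ge_2_nat[OF assms(1)] by simp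
  have "0 \<le> \<theta>" using card_target_le[OF assms(1)] p by (simp add: \<theta>_def m_def field_simps)
  have "\<theta> < 1"
    using finite_target target_nonempty[OF p] p by (simp add: \<theta>_def card_gt_0_iff)
  have "l1_dist p n (N + m) \<le> \<theta> * l1_dist p n N" for N
    using l1_dist_contraction[OF assms(1)] unfolding \<theta>_def m_def .
  then have "l1_dist p n N \<le> 2 * \<theta> ^ (N div m)" for N
    using iterate_contraction[OF \<open>0 \<le> \<theta>\<close>, where D = "l1_dist p n"] l1_dist_le_2[OF p] by blast
  from exp_decay_of_block_geometric[OF \<open>0 \<le> \<theta>\<close> \<open>\<theta> < 1\<close> \<open>m > 0\<close> _ this]
  show ?thesis by simp
qed

end
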